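(* Let $\mathscr{Z}=[\mathscr{Z}_1,\dots,\mathscr{Z}_k]\in\mathbb{R}^{n\times ks\times n_3}$ with $\mathscr{Z}_j\in\mathbb{R}^{n\times s\times n_3}$ and $s<n$, and suppose the tubal-global Gram–Schmidt procedure described in the context runs to completion on $\mathscr{Z}$ (no normalization breaks down). Then $\mathscr{Z}=\mathscr{Q}\star(\mathscr{R}\circledast\mathscr{I}_{ssn_3})$, where $\mathscr{Q}=[\mathscr{Q}_1,\dots,\mathscr{Q}_k]\in\mathbb{R}^{n\times ks\times n_3}$ is T-orthonormal, satisfying $\mathscr{Q}^T\diamondsuit\mathscr{Q}=\mathscr{I}_{kkn_3}$, and $\mathscr{R}\in\mathbb{R}^{k\times k\times n_3}$ is the upper triangular tensor (every frontal slice upper triangular) whose $(i,j)$ tube is $\mathbf{r}_{i,j}$ for $i\le j$ and the zero tube for $i>j$.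
   Context: All tensors are real third-order arrays. For $\mathscr{A}\in\mathbb{R}^{n_1\times n_2\times n_3}$, $\widehat{\mathscr{A}}=\mathscr{A}\times_3F_{n_3}$ denotes the tensor obtained by applying the discrete Fourier transform ($F_{n_3}$ with entries $\omega^{(i-1)(j-1)}$, $\omega=e^{-2\pi\mathrm{i}/n_3}$) to each tube $\mathscr{A}(i,j,:)$; its frontal slices $\hat A^{(k)}$ are the Fourier slices. T-product: $\mathscr{A}\star\mathscr{B}$ has Fourier slices $\hat A^{(k)}\hat B^{(k)}$. Transpose $\mathscr{A}^T$: transpose each frontal slice and reverse the order of frontal slices $2,\dots,n_3$. $\mathscr{I}_{nnn_3}$: first frontal slice $I_n$, others zero. A tube is an element of $\mathbb{R}^{1\times1\times n_3}$; $\mathbf{e}$ is the tube with entries $(1,0,\dots,0)$. For a tube $\mathbf{a}$ and a tensor $\mathscr{B}$, $\mathbf{a}\divideontimes\mathscr{B}$ is the tensor whose $(i,j)$ tube is $\mathbf{a}\star\mathscr{B}(i,j,:)$. T-Kronecker product $\mathscr{A}\circledast\mathscr{B}$: Fourier slices $\hat A^{(k)}\otimes\hat B^{(k)}$. T-trace of a square-sliced tensor: the tube whose $k$-th Fourier slice is the trace of the $k$-th Fourier slice. Tubal inner product of $\mathscr{X},\mathscr{Y}\in\mathbb{R}^{n\times s\times n_3}$: $\langle\mathscr{X},\mathscr{Y}\rangle_T=\text{T-trace}(\mathscr{X}^T\star\mathscr{Y})$. T-diamond product: for $\mathscr{A}=[\mathscr{A}_1,\dots,\mathscr{A}_p]$,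 $\mathscr{B}=[\mathscr{B}_1,\dots,\mathscr{B}_\ell]$ (blocks in $\mathbb{R}^{n\times s\times n_3}$), $\mathscr{A}^T\diamondsuit\mathscr{B}\in\mathbb{R}^{p\times\ell\times n_3}$ has $(i,j)$ tube $\langle\mathscr{A}_i,\mathscr{B}_j\rangle_T$. Normalization of a nonzero $\mathscr{W}\in\mathbb{R}^{n\times s\times n_3}$: let $\mathbf{a}$ be the tube whose $k$-th Fourier coefficient is $\|\hat W^{(k)}\|_F$ (breakdown if some of these is zero/below tolerance) and let $\mathscr{Q}$ be the tensor with Fourier slices $\hat W^{(k)}/\|\hat W^{(k)}\|_F$; output $[\mathscr{Q},\mathbf{a}]$, so that $\mathscr{W}=\mathbf{a}\divideontimes\mathscr{Q}$ and $\langle\mathscr{Q},\mathscr{Q}\rangle_T=\mathbf{e}$. Tubal-global Gram–Schmidt procedure: $[\mathscr{Q}_1,\mathbf{r}_{1,1}]=\mathrm{Normalization}(\mathscr{Z}_1)$; for $j=2,\dots,k$: set $\mathscr{W}=\mathscr{Z}_j$; for $i=1,\dots,j-1$ set $\mathbf{r}_{i,j}=\langle\mathscr{Q}_i,\mathscr{W}\rangle_T$ and $\mathscr{W}\leftarrow\mathscr{W}-\mathbf{r}_{i,j}\divideontimes\mathscr{Q}_i$; then $[\mathscr{Q}_j,\mathbf{r}_{j,j}]=\mathrm{Normalization}(\mathscr{W})$. *)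

theory Defs
  imports Complex_Main
begin

text \<open>Real third-order tensors are functions nat => nat => nat => real; A i j is the
  tube A(i,j,:) (a function nat => real, entries 0..n3-1).  All indices are 0-based.
  Dimensions are passed explicitly; only entries within range are meaningful.\<close>

type_synonym tube = "nat \<Rightarrow> real"
type_synonym tensor = "nat \<Rightarrow> nat \<Rightarrow> tube"

definition omega :: "nat \<Rightarrow> complex" where
  "omega n3 = cis (- 2 * pi / real n3)"

definition dft :: "nat \<Rightarrow> tube \<Rightarrow> nat \<Rightarrow> complex" where
  "dft n3 a k = (\<Sum>l<n3. complex_of_real (a l) * omega n3 ^ (k * l))"

definition idft :: "nat \<Rightarrow> (nat \<Rightarrow> complex) \<Rightarrow> tube" where
  "idft n3 c l = Re ((\<Sum>k<n3. c k * cnj (omega n3) ^ (k * l)) / of_nat n3)"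

definition zero_tube :: tube where "zero_tube = (\<lambda>l. 0)"
definition e_tube :: tube where "e_tube = (\<lambda>l. if l = 0 then 1 else 0)"

definition tid :: tensor where
  "tid = (\<lambda>i j l. if i = j \<and> l = 0 then 1 else 0)"

definition tprod :: "nat \<Rightarrow> nat \<Rightarrow> tensor \<Rightarrow> tensor \<Rightarrow> tensor" where
  "tprod n3 m A B = (\<lambda>i j. idft n3 (\<lambda>k. \<Sum>l<m. dft n3 (A i l) k * dft n3 (B l j) k))"

text \<open>Transpose: transpose each frontal slice, reverse order of slices 2..n3.\<close>
definition ttrans :: "nat \<Rightarrow> tensor \<Rightarrow> tensor" where
  "ttrans n3 A = (\<lambda>i j l. A j i ((n3 - l) mod n3))"

definition tube_mult :: "nat \<Rightarrow> tube \<Rightarrow> tube \<Rightarrow> tube" where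
  "tube_mult n3 a b = idft n3 (\<lambda>k. dft n3 a k * dft n3 b k)"

definition tube_scale :: "nat \<Rightarrow> tube \<Rightarrow> tensor \<Rightarrow> tensor" where
  "tube_scale n3 a B = (\<lambda>i j. tube_mult n3 a (B i j))"

definition tsub :: "tensor \<Rightarrow> tensor \<Rightarrow> tensor" where
  "tsub A B = (\<lambda>i j l. A i j l - B i j l)"

text \<open>T-Kronecker product of A (p x q x n3) and B (m x r x n3): Fourier slices are
  Kronecker products; row index i1*m+i2, column index j1*r+j2.\<close>
definition tkron :: "nat \<Rightarrow> nat \<Rightarrow> nat \<Rightarrow> tensor \<Rightarrow> tensor \<Rightarrow> tensor" where
  "tkron n3 m r A B = (\<lambda>i j. idft n3 (\<lambda>k.
      dft n3 (A (i div m) (j div r)) k * dft n3 (B (i mod m) (j mod r)) k))"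

definition ttrace :: "nat \<Rightarrow> nat \<Rightarrow> tensor \<Rightarrow> tube" where
  "ttrace n3 m A = idft n3 (\<lambda>k. \<Sum>i<m. dft n3 (A i i) k)"

definition tinner :: "nat \<Rightarrow> nat \<Rightarrow> nat \<Rightarrow> tensor \<Rightarrow> tensor \<Rightarrow> tube" where
  "tinner n3 n s X Y = ttrace n3 s (tprod n3 n (ttrans n3 X) Y)"

definition tblock :: "nat \<Rightarrow> tensor \<Rightarrow> nat \<Rightarrow> tensor" where
  "tblock s A i = (\<lambda>a b. A a (i * s + b))"

definition tdiamond :: "nat \<Rightarrow> nat \<Rightarrow> nat \<Rightarrow> tensor \<Rightarrow> tensor \<Rightarrow> tensor" where
  "tdiamond n3 n s A B = (\<lambda>i j. tinner n3 n s (tblock s A i) (tblock s B j))"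

definition fslice_norm :: "nat \<Rightarrow> nat \<Rightarrow> nat \<Rightarrow> tensor \<Rightarrow> nat \<Rightarrow> real" where
  "fslice_norm n3 n s W k = sqrt (\<Sum>i<n. \<Sum>j<s. (cmod (dft n3 (W i j) k))\<^sup>2)"

definition norm_breakdown :: "nat \<Rightarrow> nat \<Rightarrow> nat \<Rightarrow> tensor \<Rightarrow> bool" where
  "norm_breakdown n3 n s W = (\<exists>k<n3. fslice_norm n3 n s W k = 0)"

definition tnormalize :: "nat \<Rightarrow> nat \<Rightarrow> nat \<Rightarrow> tensor \<Rightarrow> tensor \<times> tube" where
  "tnormalize n3 n s W =
     ((\<lambda>i j. idft n3 (\<lambda>k. dft n3 (W i j) k / complex_of_real (fslice_norm n3 n s W k))),
      idft n3 (\<lambda>k. complex_of_real (fslice_norm n3 n s W k)))"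

fun gs_inner :: "nat \<Rightarrow> nat \<Rightarrow> nat \<Rightarrow> tensor list \<Rightarrow> tensor \<Rightarrow> tensor \<times> tube list" where
  "gs_inner n3 n s [] W = (W, [])"
| "gs_inner n3 n s (Q # Qs) W =
     (let r = tinner n3 n s Q W;
          res = gs_inner n3 n s Qs (tsub W (tube_scale n3 r Q))
      in (fst res, r # snd res))"

fun gsQ :: "nat \<Rightarrow> nat \<Rightarrow> nat \<Rightarrow> tensor \<Rightarrow> nat \<Rightarrow> tensor list" where
  "gsQ n3 n s Z 0 = []"
| "gsQ n3 n s Z (Suc j) =
     (let Qs = gsQ n3 n s Z j
      in Qs @ [fst (tnormalize n3 n s (fst (gs_inner n3 n s Qs (tblock s Z j))))])"

definition gsW :: "nat \<Rightarrow> nat \<Rightarrow> nat \<Rightarrow> tensor \<Rightarrow> nat \<Rightarrow> tensor" where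
  "gsW n3 n s Z j = fst (gs_inner n3 n s (gsQ n3 n s Z j) (tblock s Z j))"

definition gsR :: "nat \<Rightarrow> nat \<Rightarrow> nat \<Rightarrow> tensor \<Rightarrow> nat \<Rightarrow> nat \<Rightarrow> tube" where
  "gsR n3 n s Z i j =
     (if i < j then snd (gs_inner n3 n s (gsQ n3 n s Z j) (tblock s Z j)) ! i
      else snd (tnormalize n3 n s (gsW n3 n s Z j)))"

definition gs_completes :: "nat \<Rightarrow> nat \<Rightarrow> nat \<Rightarrow> nat \<Rightarrow> tensor \<Rightarrow> bool" where
  "gs_completes n3 n s k Z = (\<forall>j<k. \<not> norm_breakdown n3 n s (gsW n3 n s Z j))"

definition gs_Qfull :: "nat \<Rightarrow> nat \<Rightarrow> nat \<Rightarrow> nat \<Rightarrow> tensor \<Rightarrow> tensor" where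
  "gs_Qfull n3 n s k Z = (\<lambda>a b. (gsQ n3 n s Z k ! (b div s)) a (b mod s))"

definition gs_Rfull :: "nat \<Rightarrow> nat \<Rightarrow> nat \<Rightarrow> tensor \<Rightarrow> tensor" where
  "gs_Rfull n3 n s Z = (\<lambda>i j. if i \<le> j then gsR n3 n s Z i j else zero_tube)"

end

theory Submission
  imports Defs
begin

text \<open>Every operation involved acts slice by slice in the Fourier domain: the t-product
  multiplies Fourier slices, the tubal inner product becomes the Frobenius inner product of
  Fourier slices, and normalization divides each Fourier slice by its Frobenius norm. So in
  each Fourier slice the procedure is ordinary Gram-Schmidt for the Frobenius inner product:
  the slices of the Q's are orthonormal, and the slice of the j-th block of Z is the
  combination of the slices of Q_1, ..., Q_j with the coefficients r_{p,j}. Both identities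
  transfer back to real tensors because a real tube is determined by its DFT.\<close>

lemma omega_pow_eq_1_iff:
  assumes "0 < n3"
  shows "omega n3 ^ m = 1 \<longleftrightarrow> n3 dvd m"
proof
  have "omega n3 ^ n3 = 1"
    using assms by (simp add: omega_def DeMoivre complex_eq_iff)
  then show "omega n3 ^ m = 1" if "n3 dvd m"
    using that by (elim dvdE) (simp add: power_mult)
next
  assume "omega n3 ^ m = 1"
  then have "cos (real m * (- 2 * pi / real n3)) = 1"
    by (metis DeMoivre cis.sel(1) omega_def one_complex.sel(1))
  then obtain c :: int where "real m * (- 2 * pi / real n3) = real_of_int c * 2 * pi"
    using cos_one_2pi_int by blast
  then have "2 * pi * real m = 2 * pi * (real_of_int (- c) * real n3)"
    using assms by (simp add: field_simps)
  then have "real_of_int (int m) = real_of_int (- c * int n3)"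
    by (simp only: mult_cancel_left pi_neq_zero) simp
  then have "int m = - c * int n3"
    by (rule of_int_eq_iff[THEN iffD1])
  then show "n3 dvd m"
    by (metis dvd_triv_right int_dvd_int_iff)
qed

lemma norm_omega [simp]: "norm (omega n3) = 1"
  by (simp add: omega_def)

lemma omega_pow_eq_cnj:
  assumes "0 < n3" and "n3 dvd a + b"
  shows "omega n3 ^ a = cnj (omega n3 ^ b)"
proof -
  have "omega n3 ^ a * omega n3 ^ b = 1"
    using assms by (simp add: omega_pow_eq_1_iff flip: power_add)
  moreover have "omega n3 ^ b * cnj (omega n3 ^ b) = 1"
    using complex_norm_square[of "omega n3 ^ b"] by (simp add: norm_power)
  ultimately show ?thesis
    by (metis mult.assoc mult.commute mult_1_right)
qed

lemma sum_omega_pow_cnj_pow: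
  assumes "0 < n3" and "a < n3" and "b < n3"
  shows "(\<Sum>x<n3. omega n3 ^ (a * x) * cnj (omega n3) ^ (b * x)) = (if a = b then of_nat n3 else 0)"
proof -
  define m where "m = a + (n3 - 1) * b"
  have "(n3 - 1) * b + b = n3 * b"
    using assms(1) by (cases n3) auto
  then have cnj_pow: "cnj (omega n3) ^ b = omega n3 ^ ((n3 - 1) * b)"
    using omega_pow_eq_cnj[OF assms(1), of "(n3 - 1) * b" b] by simp
  have power_form: "omega n3 ^ (a * x) * cnj (omega n3) ^ (b * x) = (omega n3 ^ m) ^ x" for x
    by (simp add: m_def power_add power_mult power_mult_distrib cnj_pow)
  have "m + b = a + n3 * b"
    by (simp only: m_def add.assoc \<open>(n3 - 1) * b + b = n3 * b\<close>)
  have "n3 dvd m \<longleftrightarrow> a = b"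
  proof
    assume "n3 dvd m"
    then obtain c where "m = n3 * c" ..
    then have "(n3 * c + b) mod n3 = (a + n3 * b) mod n3"
      using \<open>m + b = a + n3 * b\<close> by simp
    then show "a = b"
      using assms by simp
  next
    assume "a = b"
    then show "n3 dvd m"
      using \<open>m + b = a + n3 * b\<close> by simp
  qed
  show ?thesis
  proof (cases "a = b")
    case True
    then have "omega n3 ^ m = 1"
      using \<open>n3 dvd m \<longleftrightarrow> a = b\<close> assms(1) by (simp add: omega_pow_eq_1_iff)
    then show ?thesis
      unfolding power_form using True by simp
  next
    case False
    have "(omega n3 ^ m) ^ n3 = 1"
      using assms(1) by (simp add: omega_pow_eq_1_iff flip: power_mult)
    then show ?thesis
      using False \<open>n3 dvd m \<longleftrightarrow> a = b\<close> geometric_sum[of "omega n3 ^ m" n3] assms(1)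
      by (simp add: power_form omega_pow_eq_1_iff)
  qed
qed

lemma reflect_mod_involution:
  "0 < (n3::nat) \<Longrightarrow> k < n3 \<Longrightarrow> (n3 - (n3 - k) mod n3) mod n3 = k"
  by (cases "k = 0") auto

lemma dvd_reflect_mod_add: "0 < (n3::nat) \<Longrightarrow> k < n3 \<Longrightarrow> n3 dvd (n3 - k) mod n3 + k"
  by (cases "k = 0") auto

lemma sum_reflect_mod:
  "0 < (n3::nat) \<Longrightarrow> (\<Sum>k<n3. f ((n3 - k) mod n3)) = (\<Sum>k<n3. f k)"
  by (rule sum.reindex_bij_witness[where i="\<lambda>k. (n3 - k) mod n3" and j="\<lambda>k. (n3 - k) mod n3"])
     (auto simp: reflect_mod_involution)

lemma omega_pow_reflect_mod:
  assumes "0 < n3" and "k < n3"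
  shows "omega n3 ^ ((n3 - k) mod n3 * l) = cnj (omega n3 ^ (k * l))"
proof (rule omega_pow_eq_cnj[OF assms(1)])
  show "n3 dvd (n3 - k) mod n3 * l + k * l"
    using dvd_reflect_mod_add[OF assms] by (simp flip: add_mult_distrib)
qed

text \<open>Conjugate symmetry characterises the Fourier coefficients of real tubes. Since
  \<^const>\<open>idft\<close> takes real parts, it inverts \<^const>\<open>dft\<close> only on such sequences.\<close>

definition conj_symmetric :: "nat \<Rightarrow> (nat \<Rightarrow> complex) \<Rightarrow> bool" where
  "conj_symmetric n3 c \<longleftrightarrow> (\<forall>k<n3. c ((n3 - k) mod n3) = cnj (c k))"

lemma conj_symmetric_dft: "0 < n3 \<Longrightarrow> conj_symmetric n3 (dft n3 a)"
  by (auto simp: conj_symmetric_def dft_def omega_pow_reflect_mod)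

lemma conj_symmetric_mult:
  "conj_symmetric n3 c \<Longrightarrow> conj_symmetric n3 d \<Longrightarrow> conj_symmetric n3 (\<lambda>k. c k * d k)"
  by (simp add: conj_symmetric_def)

lemma conj_symmetric_divide:
  "conj_symmetric n3 c \<Longrightarrow> conj_symmetric n3 d \<Longrightarrow> conj_symmetric n3 (\<lambda>k. c k / d k)"
  by (simp add: conj_symmetric_def)

lemma conj_symmetric_sum:
  "(\<And>i. i \<in> A \<Longrightarrow> conj_symmetric n3 (c i)) \<Longrightarrow> conj_symmetric n3 (\<lambda>k. \<Sum>i\<in>A. c i k)"
  unfolding conj_symmetric_def cnj_sum by (intro allI impI sum.cong refl) blast

lemma of_real_idft:
  assumes n3: "0 < n3" and c: "conj_symmetric n3 c"
  shows "complex_of_real (idft n3 c l) = (\<Sum>k<n3. c k * cnj (omega n3) ^ (k * l)) / of_nat n3"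
proof -
  define S where "S = (\<Sum>k<n3. c k * cnj (omega n3) ^ (k * l))"
  define g where "g k = c k * omega n3 ^ ((n3 - k) mod n3 * l)" for k
  have "cnj S = (\<Sum>k<n3. cnj (c k) * omega n3 ^ (k * l))"
    by (simp add: S_def)
  also have "\<dots> = (\<Sum>k<n3. g ((n3 - k) mod n3))"
    using c n3 by (intro sum.cong refl) (simp add: g_def conj_symmetric_def reflect_mod_involution)
  also have "\<dots> = (\<Sum>k<n3. g k)"
    by (rule sum_reflect_mod[OF n3])
  also have "\<dots> = S"
    by (simp add: S_def g_def omega_pow_reflect_mod[OF n3])
  finally have "cnj (S / of_nat n3) = S / of_nat n3"
    by simp
  then show ?thesis
    by (simp add: idft_def S_def[symmetric] complex_eq_iff)
qed

lemma dft_idft: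
  assumes n3: "0 < n3" and c: "conj_symmetric n3 c" and k: "k < n3"
  shows "dft n3 (idft n3 c) k = c k"
proof -
  let ?w = "omega n3"
  have "dft n3 (idft n3 c) k
      = (\<Sum>l<n3. \<Sum>k'<n3. c k' * (?w ^ (k * l) * cnj ?w ^ (k' * l)) / of_nat n3)"
    unfolding dft_def of_real_idft[OF n3 c]
    by (simp add: sum_distrib_left sum_distrib_right sum_divide_distrib mult_ac)
  also have "\<dots> = (\<Sum>k'<n3. c k' * (\<Sum>l<n3. ?w ^ (k * l) * cnj ?w ^ (k' * l)) / of_nat n3)"
    by (subst sum.swap) (simp add: sum_distrib_left sum_divide_distrib)
  also have "\<dots> = (\<Sum>k'<n3. if k' = k then c k else 0)"
    using sum_omega_pow_cnj_pow[OF n3 k] n3 by (intro sum.cong refl) auto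
  also have "\<dots> = c k"
    using k by simp
  finally show ?thesis .
qed

lemma idft_dft:
  assumes n3: "0 < n3" and l: "l < n3"
  shows "idft n3 (dft n3 a) l = a l"
proof -
  let ?w = "omega n3"
  have "(\<Sum>k<n3. dft n3 a k * cnj ?w ^ (k * l))
      = (\<Sum>l'<n3. complex_of_real (a l') * (\<Sum>k<n3. ?w ^ (l' * k) * cnj ?w ^ (l * k)))"
    unfolding dft_def sum_distrib_left sum_distrib_right
    by (subst sum.swap) (simp add: mult_ac)
  also have "\<dots> = (\<Sum>l'<n3. if l' = l then complex_of_real (a l) * of_nat n3 else 0)"
    using sum_omega_pow_cnj_pow[OF n3 _ l] by (intro sum.cong refl) auto
  also have "\<dots> = complex_of_real (a l) * of_nat n3"
    using l by simp
  finally show ?thesis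
    using n3 by (simp add: idft_def)
qed

lemma idft_cong: "(\<And>k. k < n3 \<Longrightarrow> c k = d k) \<Longrightarrow> idft n3 c = idft n3 d"
  unfolding idft_def by (intro ext arg_cong[where f = Re] arg_cong[where f = "\<lambda>x. x / _"] sum.cong) auto

lemma dft_inject:
  assumes "0 < n3" and "\<And>q. q < n3 \<Longrightarrow> dft n3 a q = dft n3 b q" and "l < n3"
  shows "a l = b l"
  using idft_dft[OF assms(1,3), of a] idft_dft[OF assms(1,3), of b] idft_cong[of n3 "dft n3 a" "dft n3 b"] assms(2)
  by simp

definition fslice :: "nat \<Rightarrow> nat \<Rightarrow> tensor \<Rightarrow> nat \<Rightarrow> nat \<Rightarrow> complex" where
  "fslice n3 q X = (\<lambda>a b. dft n3 (X a b) q)"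

definition frob_inner ::
  "nat \<Rightarrow> nat \<Rightarrow> (nat \<Rightarrow> nat \<Rightarrow> complex) \<Rightarrow> (nat \<Rightarrow> nat \<Rightarrow> complex) \<Rightarrow> complex" where
  "frob_inner n s A B = (\<Sum>b<s. \<Sum>a<n. cnj (A a b) * B a b)"

lemma dft_tprod:
  "0 < n3 \<Longrightarrow> q < n3 \<Longrightarrow>
    dft n3 (tprod n3 m A B i j) q = (\<Sum>l<m. dft n3 (A i l) q * dft n3 (B l j) q)"
  unfolding tprod_def
  by (rule dft_idft) (auto intro!: conj_symmetric_sum conj_symmetric_mult conj_symmetric_dft)

lemma dft_tube_scale:
  "0 < n3 \<Longrightarrow> q < n3 \<Longrightarrow> dft n3 (tube_scale n3 r Q i j) q = dft n3 r q * dft n3 (Q i j) q"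
  unfolding tube_scale_def tube_mult_def
  by (rule dft_idft) (auto intro!: conj_symmetric_mult conj_symmetric_dft)

lemma dft_tsub: "dft n3 (tsub A B i j) q = dft n3 (A i j) q - dft n3 (B i j) q"
  by (simp add: dft_def tsub_def sum_subtractf algebra_simps)

lemma dft_ttrans:
  assumes n3: "0 < n3"
  shows "dft n3 (ttrans n3 A i j) q = cnj (dft n3 (A j i) q)"
proof -
  define f where "f l = complex_of_real (A j i l) * omega n3 ^ (q * ((n3 - l) mod n3))" for l
  have "dft n3 (ttrans n3 A i j) q = (\<Sum>l<n3. f ((n3 - l) mod n3))"
    unfolding dft_def ttrans_def f_def by (intro sum.cong refl) (simp add: reflect_mod_involution[OF n3])
  also have "\<dots> = (\<Sum>l<n3. f l)"
    by (rule sum_reflect_mod[OF n3])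
  also have "\<dots> = cnj (dft n3 (A j i) q)"
    by (simp add: dft_def f_def mult.commute[of q] omega_pow_reflect_mod[OF n3])
  finally show ?thesis .
qed

lemma dft_ttrace:
  "0 < n3 \<Longrightarrow> q < n3 \<Longrightarrow> dft n3 (ttrace n3 m A) q = (\<Sum>i<m. dft n3 (A i i) q)"
  unfolding ttrace_def by (rule dft_idft) (auto intro!: conj_symmetric_sum conj_symmetric_dft)

lemma dft_tinner:
  "0 < n3 \<Longrightarrow> q < n3 \<Longrightarrow>
    dft n3 (tinner n3 n s X Y) q = frob_inner n s (fslice n3 q X) (fslice n3 q Y)"
  by (simp add: tinner_def dft_ttrace dft_tprod dft_ttrans frob_inner_def fslice_def)

lemma dft_tkron:
  "0 < n3 \<Longrightarrow> q < n3 \<Longrightarrow>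
    dft n3 (tkron n3 m r A B i j) q
      = dft n3 (A (i div m) (j div r)) q * dft n3 (B (i mod m) (j mod r)) q"
  unfolding tkron_def by (rule dft_idft) (auto intro!: conj_symmetric_mult conj_symmetric_dft)

lemma dft_tid:
  assumes "0 < n3"
  shows "dft n3 (tid i j) q = (if i = j then 1 else 0)"
proof -
  have "dft n3 (tid i j) q = (\<Sum>l<n3. if l = 0 then (if i = j then 1 else 0) else 0)"
    unfolding dft_def tid_def by (intro sum.cong refl) auto
  then show ?thesis
    using assms by simp
qed

lemma dft_zero_tube: "dft n3 zero_tube q = 0"
  by (simp add: dft_def zero_tube_def)

lemma conj_symmetric_fslice_norm:
  assumes "0 < n3"
  shows "conj_symmetric n3 (\<lambda>k. complex_of_real (fslice_norm n3 n s W k))"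
  using conj_symmetric_dft[OF assms] by (simp add: conj_symmetric_def fslice_norm_def)

lemma dft_tnormalize_fst:
  "0 < n3 \<Longrightarrow> q < n3 \<Longrightarrow>
    dft n3 (fst (tnormalize n3 n s W) i j) q
      = dft n3 (W i j) q / complex_of_real (fslice_norm n3 n s W q)"
  unfolding tnormalize_def fst_conv
  by (rule dft_idft) (auto intro!: conj_symmetric_divide conj_symmetric_dft conj_symmetric_fslice_norm)

lemma dft_tnormalize_snd:
  "0 < n3 \<Longrightarrow> q < n3 \<Longrightarrow>
    dft n3 (snd (tnormalize n3 n s W)) q = complex_of_real (fslice_norm n3 n s W q)"
  unfolding tnormalize_def snd_conv by (rule dft_idft) (auto intro!: conj_symmetric_fslice_norm)

lemma fslice_tnormalize:
  "0 < n3 \<Longrightarrow> q < n3 \<Longrightarrow> fslice n3 q (fst (tnormalize n3 n s W))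
    = (\<lambda>a b. fslice n3 q W a b / complex_of_real (fslice_norm n3 n s W q))"
  by (intro ext) (simp add: fslice_def dft_tnormalize_fst)

lemma dft_tnormalize_recompose:
  "0 < n3 \<Longrightarrow> q < n3 \<Longrightarrow> fslice_norm n3 n s W q \<noteq> 0 \<Longrightarrow>
    dft n3 (W i j) q = dft n3 (snd (tnormalize n3 n s W)) q * dft n3 (fst (tnormalize n3 n s W) i j) q"
  by (simp add: dft_tnormalize_fst dft_tnormalize_snd)

lemma frob_inner_cong:
  "(\<And>a b. a < n \<Longrightarrow> b < s \<Longrightarrow> A a b = A' a b) \<Longrightarrow>
    (\<And>a b. a < n \<Longrightarrow> b < s \<Longrightarrow> B a b = B' a b) \<Longrightarrow> frob_inner n s A B = frob_inner n s A' B'"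
  unfolding frob_inner_def by (intro sum.cong refl) auto

lemma frob_inner_diff_right:
  "frob_inner n s A (\<lambda>a b. X a b - Y a b) = frob_inner n s A X - frob_inner n s A Y"
  by (simp add: frob_inner_def algebra_simps sum_subtractf)

lemma frob_inner_scale_right:
  "frob_inner n s A (\<lambda>a b. c * X a b) = c * frob_inner n s A X"
  by (simp add: frob_inner_def sum_distrib_left mult_ac)

lemma frob_inner_sum_right:
  "frob_inner n s A (\<lambda>a b. \<Sum>p\<in>P. c p * Y p a b) = (\<Sum>p\<in>P. c p * frob_inner n s A (Y p))"
  unfolding frob_inner_def sum_distrib_left
  by (subst sum.swap, intro sum.cong refl, subst sum.swap) (simp add: sum_distrib_left mult_ac)

lemma frob_inner_divide_right: "frob_inner n s A (\<lambda>a b. B a b / x) = frob_inner n s A B / x"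
  by (simp add: frob_inner_def sum_divide_distrib)

lemma frob_inner_divide_left: "frob_inner n s (\<lambda>a b. A a b / x) B = frob_inner n s A B / cnj x"
  by (simp add: frob_inner_def sum_divide_distrib)

lemma frob_inner_commute: "frob_inner n s B A = cnj (frob_inner n s A B)"
  by (simp add: frob_inner_def mult.commute)

lemma frob_inner_fslice_self:
  "frob_inner n s (fslice n3 q W) (fslice n3 q W) = complex_of_real ((fslice_norm n3 n s W q)\<^sup>2)"
proof -
  have norm_sq: "(fslice_norm n3 n s W q)\<^sup>2 = (\<Sum>b<s. \<Sum>a<n. (cmod (dft n3 (W a b) q))\<^sup>2)"
    unfolding fslice_norm_def by (subst sum.swap) (simp add: sum_nonneg)
  show ?thesis
    unfolding norm_sq frob_inner_def fslice_def of_real_sum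
    by (intro sum.cong refl) (metis complex_norm_square mult.commute of_real_power)
qed

lemma fslice_gs_inner:
  assumes "0 < n3" and "q < n3"
  shows "fslice n3 q W a b = fslice n3 q (fst (gs_inner n3 n s Qs W)) a b
     + (\<Sum>p<length Qs. dft n3 (snd (gs_inner n3 n s Qs W) ! p) q * fslice n3 q (Qs ! p) a b)"
proof (induction Qs arbitrary: W)
  case (Cons Q Qs)
  let ?W' = "tsub W (tube_scale n3 (tinner n3 n s Q W) Q)"
  have "fslice n3 q ?W' a b = fslice n3 q W a b - dft n3 (tinner n3 n s Q W) q * fslice n3 q Q a b"
    by (simp add: fslice_def dft_tsub dft_tube_scale assms)
  then show ?case
    using Cons.IH[of ?W'] unfolding length_Cons sum.lessThan_Suc_shift
    by (simp add: Let_def algebra_simps)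
qed simp

definition orthonormal_fslices :: "nat \<Rightarrow> nat \<Rightarrow> nat \<Rightarrow> nat \<Rightarrow> tensor list \<Rightarrow> bool" where
  "orthonormal_fslices n3 n s q Qs \<longleftrightarrow> (\<forall>p<length Qs. \<forall>p'<length Qs.
      frob_inner n s (fslice n3 q (Qs ! p)) (fslice n3 q (Qs ! p')) = (if p = p' then 1 else 0))"

lemma orthonormal_fslices_ConsD:
  assumes "orthonormal_fslices n3 n s q (Q # Qs)"
  shows "orthonormal_fslices n3 n s q Qs"
    and "frob_inner n s (fslice n3 q Q) (fslice n3 q Q) = 1"
    and "\<And>p. p < length Qs \<Longrightarrow> frob_inner n s (fslice n3 q Q) (fslice n3 q (Qs ! p)) = 0"
  using assms unfolding orthonormal_fslices_def
  by (fastforce dest: spec[of _ 0] spec[of _ "Suc _"])+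

lemma orthonormal_fslices_snoc:
  assumes "orthonormal_fslices n3 n s q Qs"
    and "frob_inner n s (fslice n3 q Q) (fslice n3 q Q) = 1"
    and "\<And>p. p < length Qs \<Longrightarrow> frob_inner n s (fslice n3 q (Qs ! p)) (fslice n3 q Q) = 0"
  shows "orthonormal_fslices n3 n s q (Qs @ [Q])"
  unfolding orthonormal_fslices_def
proof (intro allI impI)
  have Q_orth: "frob_inner n s (fslice n3 q Q) (fslice n3 q (Qs ! p)) = 0" if "p < length Qs" for p
    using assms(3)[OF that] frob_inner_commute[of n s "fslice n3 q Q" "fslice n3 q (Qs ! p)"] by simp
  fix p p' assume "p < length (Qs @ [Q])" "p' < length (Qs @ [Q])"
  then consider "p < length Qs" "p' < length Qs" | "p < length Qs" "p' = length Qs"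
    | "p = length Qs" "p' < length Qs" | "p = length Qs" "p' = length Qs"
    by fastforce
  then show "frob_inner n s (fslice n3 q ((Qs @ [Q]) ! p)) (fslice n3 q ((Qs @ [Q]) ! p'))
      = (if p = p' then 1 else 0)"
    using assms Q_orth by cases (auto simp: orthonormal_fslices_def nth_append)
qed

text \<open>Subtracting the projection onto \<open>Q\<close> makes the residual orthogonal to \<open>Q\<close>, and the
  later subtractions along the remaining vectors, which are orthogonal to \<open>Q\<close>, preserve this.\<close>

lemma frob_inner_gs_inner_residual:
  assumes n3: "0 < n3" and q: "q < n3"
  shows "orthonormal_fslices n3 n s q Qs \<Longrightarrow> p < length Qs \<Longrightarrow>
     frob_inner n s (fslice n3 q (Qs ! p)) (fslice n3 q (fst (gs_inner n3 n s Qs W))) = 0"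
proof (induction Qs arbitrary: W p)
  case (Cons Q Qs)
  let ?r = "tinner n3 n s Q W"
  let ?W' = "tsub W (tube_scale n3 ?r Q)"
  let ?rs = "snd (gs_inner n3 n s Qs ?W')"
  note orth = orthonormal_fslices_ConsD[OF Cons.prems(1)]
  have residual: "fst (gs_inner n3 n s (Q # Qs) W) = fst (gs_inner n3 n s Qs ?W')"
    by (simp add: Let_def)
  show ?case
  proof (cases p)
    case 0
    have "fslice n3 q ?W' = (\<lambda>a b. fslice n3 q W a b - dft n3 ?r q * fslice n3 q Q a b)"
      by (simp add: fslice_def dft_tsub dft_tube_scale n3 q)
    then have "frob_inner n s (fslice n3 q Q) (fslice n3 q ?W') = 0"
      by (simp add: frob_inner_diff_right frob_inner_scale_right dft_tinner n3 q orth(2))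
    moreover have "fslice n3 q (fst (gs_inner n3 n s Qs ?W')) = (\<lambda>a b. fslice n3 q ?W' a b -
        (\<Sum>p<length Qs. dft n3 (?rs ! p) q * fslice n3 q (Qs ! p) a b))"
      using fslice_gs_inner[OF n3 q, of ?W' _ _ n s Qs] by (intro ext) (simp add: algebra_simps)
    ultimately show ?thesis
      unfolding residual using 0 orth(3) by (simp add: frob_inner_diff_right frob_inner_sum_right)
  next
    case (Suc p')
    then show ?thesis
      unfolding residual using Cons.IH[OF orth(1), of p' ?W'] Cons.prems(2) by simp
  qed
qed simp

lemma frob_inner_tnormalize_self:
  assumes "0 < n3" and "q < n3" and "fslice_norm n3 n s W q \<noteq> 0"
  shows "frob_inner n s (fslice n3 q (fst (tnormalize n3 n s W))) (fslice n3 q (fst (tnormalize n3 n s W))) = 1"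
  using assms
  by (simp add: fslice_tnormalize frob_inner_divide_left frob_inner_divide_right
      frob_inner_fslice_self power2_eq_square)

lemma length_gsQ: "length (gsQ n3 n s Z j) = j"
  by (induction j) (simp_all add: Let_def)

lemma gsQ_Suc: "gsQ n3 n s Z (Suc j) = gsQ n3 n s Z j @ [fst (tnormalize n3 n s (gsW n3 n s Z j))]"
  by (simp add: Let_def gsW_def)

lemma nth_gsQ: "p < j \<Longrightarrow> gsQ n3 n s Z j ! p = fst (tnormalize n3 n s (gsW n3 n s Z p))"
  by (induction j) (auto simp: gsQ_Suc nth_append length_gsQ less_Suc_eq simp del: gsQ.simps(2))

lemma gs_completes_fslice_norm_gsW:
  "gs_completes n3 n s k Z \<Longrightarrow> j < k \<Longrightarrow> q < n3 \<Longrightarrow> fslice_norm n3 n s (gsW n3 n s Z j) q \<noteq> 0"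
  by (simp add: gs_completes_def norm_breakdown_def)

lemma orthonormal_fslices_gsQ:
  assumes n3: "0 < n3" and q: "q < n3" and completes: "gs_completes n3 n s k Z"
  shows "j \<le> k \<Longrightarrow> orthonormal_fslices n3 n s q (gsQ n3 n s Z j)"
proof (induction j)
  case 0
  then show ?case by (simp add: orthonormal_fslices_def)
next
  case (Suc j)
  let ?Q = "fst (tnormalize n3 n s (gsW n3 n s Z j))"
  have IH: "orthonormal_fslices n3 n s q (gsQ n3 n s Z j)"
    using Suc by simp
  have unit: "frob_inner n s (fslice n3 q ?Q) (fslice n3 q ?Q) = 1"
    using gs_completes_fslice_norm_gsW[OF completes _ q] Suc.prems
    by (intro frob_inner_tnormalize_self[OF n3 q]) simp
  have "frob_inner n s (fslice n3 q (gsQ n3 n s Z j ! p)) (fslice n3 q ?Q) = 0" if "p < j" for p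
    using frob_inner_gs_inner_residual[OF n3 q IH, of p "tblock s Z j"] that
    by (simp add: fslice_tnormalize n3 q frob_inner_divide_right gsW_def length_gsQ)
  then show ?case
    unfolding gsQ_Suc using orthonormal_fslices_snoc[OF IH unit] by (simp add: length_gsQ)
qed

lemma dft_tblock_gs_expansion:
  assumes n3: "0 < n3" and q: "q < n3" and completes: "gs_completes n3 n s k Z" and j: "j < k"
  shows "dft n3 (tblock s Z j a b) q
    = (\<Sum>p<k. dft n3 (gs_Rfull n3 n s Z p j) q * dft n3 ((gsQ n3 n s Z k ! p) a b) q)"
proof -
  let ?r = "\<lambda>p. dft n3 (gsR n3 n s Z p j) q * dft n3 ((gsQ n3 n s Z k ! p) a b) q"
  let ?rs = "snd (gs_inner n3 n s (gsQ n3 n s Z j) (tblock s Z j))"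
  have diagonal: "dft n3 (gsW n3 n s Z j a b) q = ?r j"
    using dft_tnormalize_recompose[OF n3 q gs_completes_fslice_norm_gsW[OF completes j q]] j
    by (simp add: gsR_def nth_gsQ)
  have off_diagonal: "dft n3 (?rs ! p) q * dft n3 ((gsQ n3 n s Z j ! p) a b) q = ?r p"
    if "p < j" for p
    using that j by (simp add: gsR_def nth_gsQ)
  have "dft n3 (tblock s Z j a b) q = ?r j + (\<Sum>p<j. ?r p)"
    using fslice_gs_inner[OF n3 q, of "tblock s Z j" a b n s "gsQ n3 n s Z j"]
    by (simp add: fslice_def length_gsQ diagonal off_diagonal flip: gsW_def)
  also have "\<dots> = (\<Sum>p<Suc j. ?r p)"
    by (simp add: add.commute)
  also have "\<dots> = (\<Sum>p<k. dft n3 (gs_Rfull n3 n s Z p j) q * dft n3 ((gsQ n3 n s Z k ! p) a b) q)"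
    using j by (intro sum.mono_neutral_cong_left)
      (auto simp: gs_Rfull_def dft_zero_tube)
  finally show ?thesis .
qed

lemma sum_lessThan_mult_blocks:
  fixes f :: "nat \<Rightarrow> 'a::comm_monoid_add"
  shows "(\<Sum>l<k * s. f l) = (\<Sum>p<k. \<Sum>c<s. f (p * s + c))"
proof -
  have "(\<Sum>l<k * s. f l) = (\<Sum>p<k. sum f {p * s..<p * s + s})"
    using sum.nat_group[of f s k] by simp
  also have "\<dots> = (\<Sum>p<k. \<Sum>c<s. f (p * s + c))"
    by (rule sum.cong[OF refl]) (simp add: sum.atLeastLessThan_shift_0 atLeast0LessThan)
  finally show ?thesis .
qed

lemma dft_tprod_tkron_tid:
  assumes "0 < n3" and "q < n3" and "b < s"
  shows "dft n3 (tprod n3 (k * s) A (tkron n3 s s R tid) a (j * s + b)) q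
    = (\<Sum>p<k. dft n3 (R p j) q * dft n3 (A a (p * s + b)) q)"
proof -
  have "dft n3 (A a (p * s + c)) q * dft n3 (tkron n3 s s R tid (p * s + c) (j * s + b)) q
      = (if c = b then dft n3 (R p j) q * dft n3 (A a (p * s + b)) q else 0)" if "c < s" for p c
    using that assms by (simp add: dft_tkron dft_tid)
  then show ?thesis
    using assms by (simp add: dft_tprod sum_lessThan_mult_blocks)
qed

lemma gs_Qfull_block: "b < s \<Longrightarrow> gs_Qfull n3 n s k Z a (p * s + b) = (gsQ n3 n s Z k ! p) a b"
  by (simp add: gs_Qfull_def)

lemma dft_tdiamond_gs_Qfull:
  assumes n3: "0 < n3" and q: "q < n3" and completes: "gs_completes n3 n s k Z"
    and "i < k" and "j < k"
  shows "dft n3 (tdiamond n3 n s (gs_Qfull n3 n s k Z) (gs_Qfull n3 n s k Z) i j) q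
    = (if i = j then 1 else 0)"
proof -
  have "dft n3 (tdiamond n3 n s (gs_Qfull n3 n s k Z) (gs_Qfull n3 n s k Z) i j) q
      = frob_inner n s (fslice n3 q (gsQ n3 n s Z k ! i)) (fslice n3 q (gsQ n3 n s Z k ! j))"
    unfolding tdiamond_def dft_tinner[OF n3 q]
    by (rule frob_inner_cong) (simp_all add: fslice_def tblock_def gs_Qfull_block)
  then show ?thesis
    using orthonormal_fslices_gsQ[OF n3 q completes order.refl] assms(4,5)
    by (simp add: orthonormal_fslices_def length_gsQ)
qed

lemma dft_gs_factorization:
  assumes "0 < n3" and "q < n3" and "gs_completes n3 n s k Z" and "p < k" and "b < s"
  shows "dft n3 (tprod n3 (k * s) (gs_Qfull n3 n s k Z) (tkron n3 s s (gs_Rfull n3 n s Z) tid)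
      a (p * s + b)) q = dft n3 (Z a (p * s + b)) q"
  using dft_tblock_gs_expansion[OF assms(1-4), of a b] assms
  by (simp add: tblock_def dft_tprod_tkron_tid gs_Qfull_block)

theorem proposition5:
  fixes n s k n3 :: nat and Z :: tensor
  assumes "0 < n3" and "s < n"
    and "gs_completes n3 n s k Z"
  shows "(\<forall>i<n. \<forall>j<k * s. \<forall>l<n3.
            Z i j l = tprod n3 (k * s) (gs_Qfull n3 n s k Z)
                        (tkron n3 s s (gs_Rfull n3 n s Z) tid) i j l)
       \<and> (\<forall>i<k. \<forall>j<k. \<forall>l<n3.
            tdiamond n3 n s (gs_Qfull n3 n s k Z) (gs_Qfull n3 n s k Z) i j l = tid i j l)"
proof (intro conjI allI impI)
  fix i j l assume "i < n" "j < k * s" "l < n3"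
  then have "0 < s"
    by (cases s) auto
  with \<open>j < k * s\<close> have "j div s < k" "j mod s < s"
    by (simp_all add: less_mult_imp_div_less)
  then have "dft n3 (Z i j) q = dft n3 (tprod n3 (k * s) (gs_Qfull n3 n s k Z)
      (tkron n3 s s (gs_Rfull n3 n s Z) tid) i j) q" if "q < n3" for q
    using dft_gs_factorization[OF assms(1) that assms(3), of "j div s" "j mod s" i] by simp
  then show "Z i j l = tprod n3 (k * s) (gs_Qfull n3 n s k Z) (tkron n3 s s (gs_Rfull n3 n s Z) tid) i j l"
    by (rule dft_inject[OF assms(1) _ \<open>l < n3\<close>])
next
  fix i j l assume "i < k" "j < k" "l < n3"
  show "tdiamond n3 n s (gs_Qfull n3 n s k Z) (gs_Qfull n3 n s k Z) i j l = tid i j l"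
    by (rule dft_inject[OF assms(1) _ \<open>l < n3\<close>])
      (simp add: dft_tdiamond_gs_Qfull[OF assms(1) _ assms(3) \<open>i < k\<close> \<open>j < k\<close>] dft_tid[OF assms(1)])
qed

end
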